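(* Consider $u_t+\beta u_x=g$ with constant $\beta>0$ and periodic boundary conditions, and an explicit $s$-stage Runge–Kutta method with coefficients $c_{\ell\kappa},d_{\ell\kappa}$ ($0\le\kappa\le\ell\le s-1$, $\sum_{\kappa}c_{\ell\kappa}=1$). Given $u_h^{n,0}=u_h^n\in\mathbb V^k$, time step $\tau$ and source functions $g^{n,\kappa}\in L^2(\Omega)$, the RKSV stages $u_h^{n,\ell+1}\in\mathbb V^k$ are defined by $$(u_h^{n,\ell+1},\omega^* )=\sum_{0\le\kappa\le\ell}\Big(c_{\ell\kappa}(u_h^{n,\kappa},\omega^* )+\tau d_{\ell\kappa}\Big(\sum_i\sum_{j=0}^k\omega^*_{i,j}\big(\hat f^{n,\kappa}_{i,j}-\hat f^{n,\kappa}_{i,j+1}\big)+(g^{n,\kappa},\omega^* )\Big)\Big)\quad\forall\omega^*\in\mathbb V^{k,*},$$ with upwind fluxes $\hat f^{n,\kappa}_{i,j}=\beta u_h^{n,\kappa}(x_{i,j})$ for $1\le j\le k$, $\hat f^{n,\kappa}_{i,0}=\beta u_h^{n,\kappa}(x_{i-\frac12}^-)$, $\hat f^{n,\kappa}_{i,k+1}=\beta u_h^{n,\kappa}(x_{i+\frac12}^-)$, and $u_h^{n+1}=u_h^{n,s}$. Under Assumption (S), these relations are equivalent to: for all $\omega\in\mathbb V^k$ and $\ell=0,\dots,s-1$, $$(u_h^{n,\ell+1},\omega)_*=\sum_{0\le\kappa\le\ell}\Big(c_{\ell\kappa}(u_h^{n,\kappa},\omega)_*+\tau d_{\ell\kappa}\big(\mathcal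 H^*(u_h^{n,\kappa},\omega)+(g^{n,\kappa},M^*\omega)\big)\Big).$$
   Context: Let $\Omega=[a,b]$ be partitioned into finitely many cells $I_i=[x_{i-\frac12},x_{i+\frac12}]$ with sizes $h_i$; indices are periodic (the point $x_{\frac12}$ is identified with the last interface). $(\cdot,\cdot)$ is the $L^2(\Omega)$ inner product, $(\cdot,\cdot)_{I_i}$ the $L^2(I_i)$ one. $\mathbb V^k=\{v\in L^2(\Omega): v|_{I_i}\in\mathbb P^k(I_i)\ \forall i\}$. Each $I_i$ has subdivision points $x_{i-\frac12}=x_{i,0}<x_{i,1}<\dots<x_{i,k}<x_{i,k+1}=x_{i+\frac12}$, control volumes $I_{i,j}=[x_{i,j},x_{i,j+1}]$, $j=0,\dots,k$; $\mathbb V^{k,*}$ is the space of functions constant on each $I_{i,j}$, $\omega^*_{i,j}$ the value of $\omega^*$ on $I_{i,j}$. On each $I_i$ a quadrature $Q_i^k(v)=\sum_{j=0}^{k+1}A_{i,j}v(x_{i,j})$ is given, error $R_i^k(v)=\int_{I_i}v\,dx-Q_i^k(v)$, exact on $\mathbb P^{k-1}(I_i)$; for piecewise functions, $Q_i^k$ uses the restriction to $I_i$ (endpoint values are limits from inside $I_i$). $M^*:\mathbb V^k\to\mathbb V^{k,*}$: for $v=\omega|_{I_i}$, $(M^*\omega)|_{I_{i,0}}=v(x_{i-\frac12})+A_{i,0}v'(x_{i-\frac12})$ and $(M^*\omega)|_{I_{i,j}}-(M^*\omega)|_{I_{i,j-1}}=A_{i,j}v'(x_{i,j})$, $j=1,\dots,k$.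 $L_{i,\ell}$ is the shifted Legendre polynomial of degree $\ell$ on $I_i$ with $L_{i,\ell}(x_{i+\frac12})=1$, $(L_{i,\ell},L_{i,m})_{I_i}=\delta_{\ell m}h_i/(2\ell+1)$. Assumption (S): $k\ge1$ and for every $i$, (1) $R_i^k(v)=0$ for all $v\in\mathbb P^{2k-1}(I_i)$, (2) $\frac{h_i}{2k-1}-Q_i^k(L_{i,k+1}L_{i,k-1})>0$; then $(v,\omega)_*:=(v,M^*\omega)$ is an inner product on $\mathbb V^k$. Jumps: $[\![v]\!]_{i+\frac12}=v(x_{i+\frac12}^+)-v(x_{i+\frac12}^-)$. For $\omega\in\mathbb V^k$ and piecewise smooth $v$: $\mathcal H^*(v,\omega)=\beta\Big(\sum_iQ_i^k(v\omega_x)+\sum_iv(x_{i+\frac12}^-)[\![\omega]\!]_{i+\frac12}-\sum_iA_{i,0}\,\omega_x(x_{i-\frac12}^+)[\![v]\!]_{i-\frac12}\Big)$. *)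

theory Defs
  imports "HOL-Analysis.Analysis" "HOL-Computational_Algebra.Polynomial"
begin

(* Mesh: N cells, cell i (i < N) is [xs i, xs (Suc i)], i.e. x_{i-1/2} = xs i.
   Subdivision points p i j, j = 0..k+1, with p i 0 = xs i, p i (k+1) = xs (Suc i).
   Periodic neighbours of a cell. *)
definition prev_cell :: "nat \<Rightarrow> nat \<Rightarrow> nat" where
  "prev_cell N i = (i + N - 1) mod N"

definition next_cell :: "nat \<Rightarrow> nat \<Rightarrow> nat" where
  "next_cell N i = Suc i mod N"

definition valid_mesh :: "nat \<Rightarrow> nat \<Rightarrow> (nat \<Rightarrow> real) \<Rightarrow> (nat \<Rightarrow> nat \<Rightarrow> real) \<Rightarrow> bool" where
  "valid_mesh N k xs p \<longleftrightarrow> 1 \<le> N \<and>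
     (\<forall>i<N. xs i < xs (Suc i)) \<and>
     (\<forall>i<N. p i 0 = xs i \<and> p i (Suc k) = xs (Suc i) \<and> (\<forall>j\<le>k. p i j < p i (Suc j)))"

(* Elements of V^k: v :: nat => real poly, v i = restriction to cell i, degree <= k.
   Elements of V^{k,star}: w :: nat => nat => real, w i j = value on I_{i,j}. *)
definition in_Vk :: "nat \<Rightarrow> nat \<Rightarrow> (nat \<Rightarrow> real poly) \<Rightarrow> bool" where
  "in_Vk N k v \<longleftrightarrow> (\<forall>i<N. degree (v i) \<le> k)"

definition pair_star :: "nat \<Rightarrow> nat \<Rightarrow> (nat \<Rightarrow> nat \<Rightarrow> real) \<Rightarrow> (nat \<Rightarrow> real poly) \<Rightarrow> (nat \<Rightarrow> nat \<Rightarrow> real) \<Rightarrow> real" where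
  "pair_star N k p v w = (\<Sum>i<N. \<Sum>j\<le>k. w i j * integral {p i j..p i (Suc j)} (\<lambda>x. poly (v i) x))"

definition src_star :: "nat \<Rightarrow> nat \<Rightarrow> (nat \<Rightarrow> nat \<Rightarrow> real) \<Rightarrow> (real \<Rightarrow> real) \<Rightarrow> (nat \<Rightarrow> nat \<Rightarrow> real) \<Rightarrow> real" where
  "src_star N k p g w = (\<Sum>i<N. \<Sum>j\<le>k. w i j * integral {p i j..p i (Suc j)} g)"

definition flux :: "nat \<Rightarrow> nat \<Rightarrow> (nat \<Rightarrow> real) \<Rightarrow> (nat \<Rightarrow> nat \<Rightarrow> real) \<Rightarrow> real \<Rightarrow> (nat \<Rightarrow> real poly) \<Rightarrow> nat \<Rightarrow> nat \<Rightarrow> real" where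
  "flux N k xs p \<beta> u i j =
     (if j = 0 then \<beta> * poly (u (prev_cell N i)) (xs (Suc (prev_cell N i)))
      else if j = Suc k then \<beta> * poly (u i) (xs (Suc i))
      else \<beta> * poly (u i) (p i j))"

definition flux_term :: "nat \<Rightarrow> nat \<Rightarrow> (nat \<Rightarrow> real) \<Rightarrow> (nat \<Rightarrow> nat \<Rightarrow> real) \<Rightarrow> real \<Rightarrow> (nat \<Rightarrow> real poly) \<Rightarrow> (nat \<Rightarrow> nat \<Rightarrow> real) \<Rightarrow> real" where
  "flux_term N k xs p \<beta> u w =
     (\<Sum>i<N. \<Sum>j\<le>k. w i j * (flux N k xs p \<beta> u i j - flux N k xs p \<beta> u i (Suc j)))"

definition quad :: "nat \<Rightarrow> (nat \<Rightarrow> nat \<Rightarrow> real) \<Rightarrow> (nat \<Rightarrow> nat \<Rightarrow> real) \<Rightarrow> nat \<Rightarrow> (real \<Rightarrow> real) \<Rightarrow> real" where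
  "quad k A p i f = (\<Sum>j\<le>Suc k. A i j * f (p i j))"

(* M^* : V^k -> V^{k,star}, unfolded recursion:
   (M^* w)_{i,j} = w(x_{i-1/2}) + \<Sum>_{m=0}^{j} A_{i,m} w'(x_{i,m}) *)
definition Mstar :: "(nat \<Rightarrow> nat \<Rightarrow> real) \<Rightarrow> (nat \<Rightarrow> real) \<Rightarrow> (nat \<Rightarrow> nat \<Rightarrow> real) \<Rightarrow> (nat \<Rightarrow> real poly) \<Rightarrow> nat \<Rightarrow> nat \<Rightarrow> real" where
  "Mstar A xs p w i j = poly (w i) (xs i) + (\<Sum>m\<le>j. A i m * poly (pderiv (w i)) (p i m))"

definition Hstar :: "nat \<Rightarrow> nat \<Rightarrow> (nat \<Rightarrow> real) \<Rightarrow> (nat \<Rightarrow> nat \<Rightarrow> real) \<Rightarrow> (nat \<Rightarrow> nat \<Rightarrow> real) \<Rightarrow> real \<Rightarrow> (nat \<Rightarrow> real poly) \<Rightarrow> (nat \<Rightarrow> real poly) \<Rightarrow> real" where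
  "Hstar N k xs p A \<beta> v w = \<beta> *
     ((\<Sum>i<N. quad k A p i (\<lambda>x. poly (v i) x * poly (pderiv (w i)) x))
      + (\<Sum>i<N. poly (v i) (xs (Suc i)) *
                 (poly (w (next_cell N i)) (xs (next_cell N i)) - poly (w i) (xs (Suc i))))
      - (\<Sum>i<N. A i 0 * poly (pderiv (w i)) (xs i) *
                 (poly (v i) (xs i) - poly (v (prev_cell N i)) (xs (Suc (prev_cell N i))))))"

(* shifted Legendre polynomial of degree l on [xl, xr] with h = xr - xl, normalised by value 1 at xr:
   L(x) = P_l(2(x-xl)/h - 1) = \<Sum>_m C(l,m) C(l+m,m) ((x - xr)/h)^m *)
definition shifted_legendre :: "real \<Rightarrow> real \<Rightarrow> nat \<Rightarrow> real \<Rightarrow> real" where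
  "shifted_legendre xl xr l x =
     (\<Sum>m\<le>l. real (l choose m) * real ((l + m) choose m) * ((x - xr) / (xr - xl)) ^ m)"

definition assumption_S :: "nat \<Rightarrow> nat \<Rightarrow> (nat \<Rightarrow> real) \<Rightarrow> (nat \<Rightarrow> nat \<Rightarrow> real) \<Rightarrow> (nat \<Rightarrow> nat \<Rightarrow> real) \<Rightarrow> bool" where
  "assumption_S N k xs p A \<longleftrightarrow> 1 \<le> k \<and>
     (\<forall>i<N.
        (\<forall>q :: real poly. degree q \<le> 2 * k - 1 \<longrightarrow>
            integral {xs i..xs (Suc i)} (poly q) = quad k A p i (poly q)) \<and>
        (xs (Suc i) - xs i) / real (2 * k - 1)
          - quad k A p i (\<lambda>x. shifted_legendre (xs i) (xs (Suc i)) (Suc k) x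
                              * shifted_legendre (xs i) (xs (Suc i)) (k - 1) x) > 0)"

end

theory Submission
  imports Defs
begin

(* Testing the RKSV relations with \<omega>* = M*\<omega> gives the new form: on each cell, summation by
   parts, exactness of Q on \<omega>' and the upwind fluxes turn the flux sum into H*(u, \<omega>), the inflow
   values being reindexed periodically. Conversely the relations only involve \<omega>* on the cells,
   so it suffices that M* maps V^k onto V^{k,*}.

   Surjectivity is proved cell by cell by interpolating \<omega>' at the interior nodes, which needs
   the interior weights A_j to be nonzero; this follows from injectivity of M*. If M*v = 0, then
   Q(v'F) = v(b)F(b) - v(a)F(a) for every F, so the integral of vF' is minus the quadrature error
   of v'F. Hence v is orthogonal to P^{k-1}, i.e. a multiple of the Legendre polynomial L_k, and
   the integral of v^2 is proportional to the error constant \<rho> = R(x^{2k}). Comparing with the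
   norm of L_k determines \<rho>, and then Q(L_{k+1} L_{k-1}) = h/(2k-1), which (S)(2) rules out. *)


section \<open>Integrals and antiderivatives of polynomials\<close>

lemma integrable_on_poly: "poly p integrable_on {a..b::real}"
  by (intro integrable_continuous_real continuous_intros)

lemma integral_poly_0 [simp]: "integral S (poly 0) = (0::real)"
  by (simp add: poly_0[abs_def])

lemma integral_poly_add:
  "integral {a..b::real} (poly (p + q)) = integral {a..b} (poly p) + integral {a..b} (poly q)"
  by (simp add: integral_add integrable_on_poly poly_add[abs_def] del: poly_add)

lemma integral_poly_diff:
  "integral {a..b::real} (poly (p - q)) = integral {a..b} (poly p) - integral {a..b} (poly q)"
  by (simp add: integral_diff integrable_on_poly poly_diff[abs_def] del: poly_diff)

lemma integral_poly_smult: "integral {a..b::real} (poly (smult c p)) = c * integral {a..b} (poly p)"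
  by (simp add: poly_smult[abs_def] del: poly_smult)

lemma integral_poly_pderiv:
  assumes "a \<le> (b::real)"
  shows "integral {a..b} (poly (pderiv p)) = poly p b - poly p a"
proof (rule integral_unique, rule fundamental_theorem_of_calculus[OF assms])
  fix x
  show "(poly p has_vector_derivative poly (pderiv p) x) (at x within {a..b})"
    by (simp add: has_real_derivative_iff_has_vector_derivative[symmetric] has_field_derivative_at_within)
qed

lemma integral_poly_by_parts:
  assumes "a \<le> (b::real)"
  shows "integral {a..b} (poly (pderiv p * q))
       = poly p b * poly q b - poly p a * poly q a - integral {a..b} (poly (p * pderiv q))"
proof -
  have "pderiv (p * q) = pderiv p * q + p * pderiv q"
    by (simp add: pderiv_mult algebra_simps)
  then have "integral {a..b} (poly (pderiv p * q)) + integral {a..b} (poly (p * pderiv q))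
      = integral {a..b} (poly (pderiv (p * q)))"
    by (simp only: integral_poly_add)
  also have "\<dots> = poly p b * poly q b - poly p a * poly q a"
    by (simp add: integral_poly_pderiv[OF assms])
  finally show ?thesis by linarith
qed

lemma integral_poly_square_eq_0_iff:
  assumes "a < (b::real)"
  shows "integral {a..b} (poly (p * p)) = 0 \<longleftrightarrow> p = 0"
proof
  assume "integral {a..b} (poly (p * p)) = 0"
  moreover have "continuous_on (cbox a b) (poly (p * p))"
    by (rule continuous_on_poly) (rule continuous_on_id)
  ultimately have "\<forall>x\<in>{a..b}. poly p x = 0"
    using integral_cbox_eq_0_iff[of a b "poly (p * p)"] assms by simp
  then have "{a..b} \<subseteq> {x. poly p x = 0}" by auto
  then show "p = 0"
    using finite_subset infinite_Icc[OF assms] poly_roots_finite by metis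
qed simp

definition poly_antideriv :: "'a::field_char_0 poly \<Rightarrow> 'a poly" where
  "poly_antideriv q = (\<Sum>i\<le>degree q. monom (coeff q i / of_nat (Suc i)) (Suc i))"

lemma coeff_poly_antideriv:
  "coeff (poly_antideriv q) n = (if n = 0 then 0 else coeff q (n - 1) / of_nat n)"
proof (cases n)
  case (Suc m)
  have "coeff (poly_antideriv q) n = (\<Sum>i\<le>degree q. if i = m then coeff q m / of_nat n else 0)"
    unfolding poly_antideriv_def coeff_sum coeff_monom Suc by (intro sum.cong) auto
  then show ?thesis
    using Suc by (auto simp: coeff_eq_0)
qed (simp add: poly_antideriv_def coeff_sum)

lemma degree_poly_antideriv: "degree (poly_antideriv q) \<le> Suc (degree q)"
  by (rule degree_le) (auto simp: coeff_poly_antideriv coeff_eq_0)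

lemma pderiv_poly_antideriv: "pderiv (poly_antideriv q) = q"
  by (rule poly_eqI) (simp add: coeff_pderiv coeff_poly_antideriv del: of_nat_Suc)

section \<open>Polynomial algebra\<close>

lemma degree_le_pred_if_coeff_eq_0: "degree p \<le> n \<Longrightarrow> coeff p n = 0 \<Longrightarrow> degree p \<le> n - 1"
  by (cases "degree p = n") auto

lemma coeff_mult_degree_le_sum:
  fixes p q :: "'a::idom poly"
  assumes "degree p \<le> m" "degree q \<le> n"
  shows "coeff (p * q) (m + n) = coeff p m * coeff q n"
proof (cases "degree p = m \<and> degree q = n")
  case True
  then show ?thesis using coeff_mult_degree_sum by metis
next
  case False
  with assms have "coeff p m = 0 \<or> coeff q n = 0" "degree (p * q) < m + n"
    using degree_mult_le[of p q] by (auto simp: coeff_eq_0)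
  then show ?thesis by (auto simp: coeff_eq_0)
qed

lemma pderiv_linear_power_Suc: "pderiv ([:c, 1:] ^ Suc m) = smult (of_nat (Suc m)) ([:c, 1::'a::idom:] ^ m)"
  by (simp add: pderiv_power_Suc pderiv_pCons del: power_Suc of_nat_Suc)

lemma pderiv_linear_power_Suc_div:
  "pderiv (smult (1 / of_nat (Suc m)) ([:c, 1:] ^ Suc m)) = [:c, 1::'a::field_char_0:] ^ m"
  by (simp add: pderiv_smult pderiv_linear_power_Suc del: of_nat_Suc power_Suc)

lemma linear_power_Suc_dvd_imp_dvd_pderiv:
  fixes p :: "'a::idom poly"
  assumes "[:c, 1:] ^ Suc n dvd p"
  shows "[:c, 1:] ^ n dvd pderiv p"
proof -
  obtain q where q: "p = [:c, 1:] ^ Suc n * q"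
    using assms by (elim dvdE)
  have "pderiv p = [:c, 1:] ^ Suc n * pderiv q + q * smult (of_nat (Suc n)) ([:c, 1:] ^ n)"
    by (simp only: q pderiv_mult pderiv_linear_power_Suc)
  also have "\<dots> = [:c, 1:] ^ n * ([:c, 1:] * pderiv q + smult (of_nat (Suc n)) q)"
    by (simp only: power_Suc) (simp add: algebra_simps del: of_nat_Suc)
  finally show ?thesis by (simp del: power_Suc)
qed

lemma linear_power_dvd_higher_pderiv:
  fixes p :: "'a::idom poly"
  assumes "[:c, 1:] ^ n dvd p" "m \<le> n"
  shows "[:c, 1:] ^ (n - m) dvd (pderiv ^^ m) p"
  using assms(2)
proof (induction m)
  case (Suc m)
  then have "[:c, 1:] ^ Suc (n - Suc m) dvd (pderiv ^^ m) p"
    by (simp add: Suc_diff_Suc Suc_le_lessD)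
  then show ?case
    by (simp add: linear_power_Suc_dvd_imp_dvd_pderiv del: power_Suc)
qed (use assms in simp)

lemma higher_pderiv_eq_const_if_degree_le:
  fixes q :: "'a::{idom, semiring_char_0} poly"
  assumes "degree q \<le> l"
  shows "(pderiv ^^ l) q = [:fact l * coeff q l:]"
proof (rule poly_eqI)
  fix n
  show "coeff ((pderiv ^^ l) q) n = coeff [:fact l * coeff q l:] n"
    using assms by (cases n) (auto simp: coeff_higher_pderiv pochhammer_fact coeff_eq_0)
qed

lemma higher_pderiv_linear_power:
  "(pderiv ^^ l) ([:c, 1:] ^ (j + l)) = smult (pochhammer (of_nat (Suc j)) l) ([:c, 1::'a::idom:] ^ j)"
proof (induction l)
  case (Suc l)
  have "(pderiv ^^ Suc l) ([:c, 1:] ^ (j + Suc l)) = (pderiv ^^ l) (pderiv ([:c, 1:] ^ Suc (j + l)))"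
    by (simp add: funpow_Suc_right del: funpow.simps power_Suc)
  also have "\<dots> = smult (pochhammer (of_nat (Suc j)) l * of_nat (Suc j + l)) ([:c, 1:] ^ j)"
    by (simp only: pderiv_linear_power_Suc higher_pderiv_smult Suc smult_smult add_Suc mult.commute)
  finally show ?case
    by (simp only: pochhammer_Suc of_nat_add)
qed simp

lemma pochhammer_Suc_eq_fact_div: "pochhammer (of_nat (Suc j)) l = (fact (j + l) / fact j :: 'a::field_char_0)"
proof -
  have "fact (j + l) = fact j * (pochhammer (of_nat (Suc j)) l :: 'a)"
    using pochhammer_product'[of 1 j l] by (simp add: pochhammer_fact add.commute)
  then show ?thesis by simp
qed

lemma exists_interpolating_poly:
  fixes x y :: "'b \<Rightarrow> 'a::field"
  assumes "finite S" "inj_on x S"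
  shows "\<exists>p. degree p \<le> card S - 1 \<and> (\<forall>i\<in>S. poly p (x i) = y i)"
proof -
  define L where "L j = (\<Prod>m\<in>S - {j}. [:- x m, 1:])" for j
  define p where "p = (\<Sum>j\<in>S. smult (y j / (\<Prod>m\<in>S - {j}. x j - x m)) (L j))"
  have "degree (L j) \<le> card S - 1" if "j \<in> S" for j
  proof -
    have "degree (L j) \<le> sum (degree \<circ> (\<lambda>m. [:- x m, 1:])) (S - {j})"
      unfolding L_def using assms(1) by (intro degree_prod_sum_le) simp
    also have "\<dots> = card S - 1"
      using that assms(1) by simp
    finally show ?thesis .
  qed
  then have "degree p \<le> card S - 1"
    unfolding p_def using assms(1) by (intro degree_sum_le) (auto intro: order.trans[OF degree_smult_le])
  moreover have "poly p (x i) = y i" if "i \<in> S" for i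
  proof -
    have "poly p (x i) = (\<Sum>j\<in>S. y j / (\<Prod>m\<in>S - {j}. x j - x m) * (\<Prod>m\<in>S - {j}. x i - x m))"
      by (simp add: p_def L_def poly_sum poly_prod)
    also have "\<dots> = (\<Sum>j\<in>S. if j = i then y i else 0)"
    proof (rule sum.cong)
      fix j assume "j \<in> S"
      show "y j / (\<Prod>m\<in>S - {j}. x j - x m) * (\<Prod>m\<in>S - {j}. x i - x m) = (if j = i then y i else 0)"
      proof (cases "j = i")
        case True
        have "(\<Prod>m\<in>S - {j}. x j - x m) \<noteq> 0"
          using assms \<open>j \<in> S\<close> by (subst prod_zero_iff) (auto simp: inj_on_def)
        then show ?thesis using True by simp
      next
        case False
        then have "(\<Prod>m\<in>S - {j}. x i - x m) = 0"
          using assms(1) that by (intro prod_zero) auto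
        then show ?thesis using False by simp
      qed
    qed simp
    also have "\<dots> = y i"
      using that assms(1) by simp
    finally show ?thesis .
  qed
  ultimately show ?thesis by blast
qed

section \<open>Legendre polynomials via Rodrigues' formula\<close>

definition rodrigues_kernel :: "real \<Rightarrow> real \<Rightarrow> nat \<Rightarrow> real poly" where
  "rodrigues_kernel a b l = [:-a, 1:] ^ l * [:-b, 1:] ^ l"

lemma poly_higher_pderiv_rodrigues_kernel:
  assumes "m < l"
  shows "poly ((pderiv ^^ m) (rodrigues_kernel a b l)) a = 0"
    and "poly ((pderiv ^^ m) (rodrigues_kernel a b l)) b = 0"
proof -
  have "[:-c, 1:] dvd (pderiv ^^ m) (rodrigues_kernel a b l)" if "c = a \<or> c = b" for c
  proof -
    have "[:-c, 1:] ^ (l - m) dvd (pderiv ^^ m) (rodrigues_kernel a b l)"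
      using that assms by (intro linear_power_dvd_higher_pderiv) (auto simp: rodrigues_kernel_def)
    moreover have "[:-c, 1:] dvd [:-c, 1:] ^ (l - m)"
      using assms by simp
    ultimately show ?thesis by (rule dvd_trans[rotated])
  qed
  then show "poly ((pderiv ^^ m) (rodrigues_kernel a b l)) a = 0"
    and "poly ((pderiv ^^ m) (rodrigues_kernel a b l)) b = 0"
    by (simp_all add: poly_eq_0_iff_dvd)
qed

lemma integral_higher_pderiv_rodrigues_kernel:
  assumes "a \<le> b" "m \<le> l"
  shows "integral {a..b} (poly ((pderiv ^^ m) (rodrigues_kernel a b l) * q))
       = (-1) ^ m * integral {a..b} (poly (rodrigues_kernel a b l * (pderiv ^^ m) q))"
  using assms(2)
proof (induction m arbitrary: q)
  case (Suc m)
  have "integral {a..b} (poly ((pderiv ^^ Suc m) (rodrigues_kernel a b l) * q))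
      = - integral {a..b} (poly ((pderiv ^^ m) (rodrigues_kernel a b l) * pderiv q))"
    using integral_poly_by_parts[OF assms(1)] poly_higher_pderiv_rodrigues_kernel[of m l] Suc.prems
    by (simp del: poly_mult)
  also have "\<dots> = (-1) ^ Suc m * integral {a..b} (poly (rodrigues_kernel a b l * (pderiv ^^ Suc m) q))"
    using Suc by (simp add: funpow_Suc_right del: funpow.simps poly_mult)
  finally show ?case .
qed simp

lemma integral_linear_powers:
  fixes a b :: real
  assumes "a \<le> b"
  shows "integral {a..b} (poly ([:-a, 1:] ^ m * [:-b, 1:] ^ n))
       = (-1) ^ n * fact m * fact n * (b - a) ^ (m + n + 1) / fact (m + n + 1)"
proof (induction n arbitrary: m)
  case 0
  have "integral {a..b} (poly ([:-a, 1:] ^ m)) = (b - a) ^ Suc m / of_nat (Suc m)"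
    using integral_poly_pderiv[OF assms, of "smult (1 / of_nat (Suc m)) ([:-a, 1:] ^ Suc m)"]
      pderiv_linear_power_Suc_div[of m "-a"]
    by (simp add: left_diff_distrib)
  moreover have "(b - a) ^ Suc m / of_nat (Suc m)
      = (-1) ^ 0 * fact m * fact 0 * (b - a) ^ (m + 0 + 1) / (fact (m + 0 + 1) :: real)"
    by (simp del: of_nat_Suc power_Suc)
  ultimately show ?case
    by (simp del: poly_power)
next
  case (Suc n)
  have "integral {a..b} (poly ([:-a, 1:] ^ m * [:-b, 1:] ^ Suc n))
      = - integral {a..b} (poly (smult (1 / of_nat (Suc m)) ([:-a, 1:] ^ Suc m) * pderiv ([:-b, 1:] ^ Suc n)))"
    using integral_poly_by_parts[OF assms, of "smult (1 / of_nat (Suc m)) ([:-a, 1:] ^ Suc m)" "[:-b, 1:] ^ Suc n"]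
      pderiv_linear_power_Suc_div[of m "-a"]
    by (simp del: power_Suc)
  also have "smult (1 / of_nat (Suc m)) ([:-a, 1:] ^ Suc m) * pderiv ([:-b, 1:] ^ Suc n)
      = smult (of_nat (Suc n) / of_nat (Suc m)) ([:-a, 1:] ^ Suc m * [:-b, 1:] ^ n)"
    by (simp add: pderiv_linear_power_Suc del: of_nat_Suc power_Suc)
  also have "- integral {a..b} (poly \<dots>)
      = - (of_nat (Suc n) / of_nat (Suc m))
        * ((-1) ^ n * fact (Suc m) * fact n * (b - a) ^ (Suc m + n + 1) / fact (Suc m + n + 1))"
    by (simp only: integral_poly_smult Suc)
  also have "\<dots> = (-1) ^ Suc n * fact m * fact (Suc n) * (b - a) ^ (m + Suc n + 1) / fact (m + Suc n + 1)"
    by (simp del: of_nat_Suc)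
  finally show ?case .
qed

definition rodrigues_poly :: "real \<Rightarrow> real \<Rightarrow> nat \<Rightarrow> real poly" where
  "rodrigues_poly a b l = (pderiv ^^ l) (rodrigues_kernel a b l)"

lemma degree_rodrigues_kernel: "degree (rodrigues_kernel a b l) = 2 * l"
  by (simp add: rodrigues_kernel_def degree_mult_eq degree_linear_power)

lemma coeff_rodrigues_kernel_top: "coeff (rodrigues_kernel a b l) (2 * l) = 1"
  using coeff_mult_degree_sum[of "[:-a, 1:] ^ l" "[:-b, 1:] ^ l"]
  by (simp add: rodrigues_kernel_def degree_linear_power coeff_linear_power mult_2)

lemma degree_rodrigues_poly: "degree (rodrigues_poly a b l) = l"
  by (simp add: rodrigues_poly_def degree_higher_pderiv degree_rodrigues_kernel)

lemma coeff_rodrigues_poly_top: "coeff (rodrigues_poly a b l) l = fact (2 * l) / fact l"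
  using coeff_rodrigues_kernel_top[of a b l] pochhammer_Suc_eq_fact_div[of l l]
  by (simp add: rodrigues_poly_def coeff_higher_pderiv mult_2)

lemma integral_rodrigues_poly_mult:
  assumes "a \<le> b" "degree q \<le> l"
  shows "integral {a..b} (poly (rodrigues_poly a b l * q))
       = coeff q l * fact l ^ 3 * (b - a) ^ (2 * l + 1) / fact (2 * l + 1)"
proof -
  have "integral {a..b} (poly (rodrigues_poly a b l * q))
      = (-1) ^ l * integral {a..b} (poly (rodrigues_kernel a b l * [:fact l * coeff q l:]))"
    using integral_higher_pderiv_rodrigues_kernel[OF assms(1) order.refl, of l q]
    by (simp only: rodrigues_poly_def higher_pderiv_eq_const_if_degree_le[OF assms(2)])
  also have "rodrigues_kernel a b l * [:fact l * coeff q l:] = smult (fact l * coeff q l) (rodrigues_kernel a b l)"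
    by simp
  also have "integral {a..b} (poly (rodrigues_kernel a b l))
      = (-1) ^ l * fact l * fact l * (b - a) ^ (2 * l + 1) / fact (2 * l + 1)"
    using integral_linear_powers[OF assms(1), of l l] by (simp only: rodrigues_kernel_def mult_2)
  then have "(-1) ^ l * integral {a..b} (poly (smult (fact l * coeff q l) (rodrigues_kernel a b l)))
      = ((-1) ^ l * (-1) ^ l) * (coeff q l * fact l ^ 3 * (b - a) ^ (2 * l + 1) / fact (2 * l + 1))"
    by (simp only: integral_poly_smult) (simp add: power3_eq_cube)
  finally show ?thesis
    by (simp del: poly_mult flip: power_add)
qed

lemma integral_rodrigues_poly_orthogonal:
  assumes "a \<le> b" "degree q < l"
  shows "integral {a..b} (poly (rodrigues_poly a b l * q)) = 0"
  using integral_rodrigues_poly_mult[OF assms(1), of q] assms(2) by (simp add: coeff_eq_0)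

lemma integral_square_if_orthogonal:
  assumes "a < (b::real)" "degree v \<le> k"
    and orthogonal: "\<And>q. degree q < k \<Longrightarrow> integral {a..b} (poly (v * q)) = 0"
  shows "integral {a..b} (poly (v * v))
       = coeff v k ^ 2 * fact k ^ 4 * (b - a) ^ (2 * k + 1) / (fact (2 * k) * fact (2 * k + 1))"
proof -
  define c where "c = coeff v k * fact k / fact (2 * k)"
  define r where "r = v - smult c (rodrigues_poly a b k)"
  have "degree r \<le> k"
    unfolding r_def using assms(2) degree_smult_le[of c "rodrigues_poly a b k"]
    by (intro degree_diff_le) (simp_all add: degree_rodrigues_poly)
  moreover have "coeff r k = 0"
    by (simp add: r_def c_def coeff_rodrigues_poly_top)
  ultimately have "r = 0 \<or> degree r < k"
    by (metis le_neq_implies_less leading_coeff_0_iff)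
  then have "integral {a..b} (poly (v * r)) = 0"
    using orthogonal by auto
  moreover have "v * v = v * r + smult c (rodrigues_poly a b k * v)"
    by (simp add: r_def algebra_simps)
  ultimately have "integral {a..b} (poly (v * v)) = c * integral {a..b} (poly (rodrigues_poly a b k * v))"
    by (simp only: integral_poly_add integral_poly_smult)
  also have "\<dots> = c * (coeff v k * fact k ^ 3 * (b - a) ^ (2 * k + 1) / fact (2 * k + 1))"
    using integral_rodrigues_poly_mult[of a b v k] assms(1,2) by simp
  finally show ?thesis
    by (simp add: c_def power2_eq_square power4_eq_xxxx power3_eq_cube)
qed

definition legendre_poly :: "real \<Rightarrow> real \<Rightarrow> nat \<Rightarrow> real poly" where
  "legendre_poly a b l = smult (1 / (fact l * (b - a) ^ l)) (rodrigues_poly a b l)"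

lemma rodrigues_kernel_expansion:
  "rodrigues_kernel a b l = (\<Sum>j\<le>l. smult (of_nat (l choose j) * (b - a) ^ (l - j)) ([:-b, 1:] ^ (j + l)))"
proof (rule poly_ext)
  fix x :: real
  have "poly (rodrigues_kernel a b l) x = ((x - b) + (b - a)) ^ l * (x - b) ^ l"
    by (simp add: rodrigues_kernel_def)
  also have "\<dots> = (\<Sum>j\<le>l. of_nat (l choose j) * (x - b) ^ j * (b - a) ^ (l - j)) * (x - b) ^ l"
    by (simp only: binomial_ring)
  also have "\<dots> = (\<Sum>j\<le>l. of_nat (l choose j) * (b - a) ^ (l - j) * (x - b) ^ (j + l))"
    unfolding sum_distrib_right by (rule sum.cong) (simp_all add: power_add algebra_simps)
  finally show "poly (rodrigues_kernel a b l) x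
      = poly (\<Sum>j\<le>l. smult (of_nat (l choose j) * (b - a) ^ (l - j)) ([:-b, 1:] ^ (j + l))) x"
    by (simp add: poly_sum)
qed

lemma rodrigues_poly_expansion:
  "rodrigues_poly a b l
     = (\<Sum>j\<le>l. smult (of_nat (l choose j) * (b - a) ^ (l - j) * pochhammer (of_nat (Suc j)) l) ([:-b, 1:] ^ j))"
  by (simp add: rodrigues_poly_def rodrigues_kernel_expansion higher_pderiv_sum higher_pderiv_smult
      higher_pderiv_linear_power)

lemma poly_legendre_poly:
  assumes "a < b"
  shows "poly (legendre_poly a b l) x = shifted_legendre a b l x"
proof -
  have "poly (legendre_poly a b l) x
      = (\<Sum>j\<le>l. of_nat (l choose j) * (b - a) ^ (l - j) * (fact (j + l) / fact j)
                  / (fact l * (b - a) ^ l) * (x - b) ^ j)"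
    by (simp add: legendre_poly_def rodrigues_poly_expansion poly_sum sum_distrib_left
        pochhammer_Suc_eq_fact_div mult_ac del: of_nat_Suc)
  also have "\<dots> = (\<Sum>j\<le>l. real (l choose j) * real ((l + j) choose j) * ((x - b) / (b - a)) ^ j)"
  proof (rule sum.cong)
    fix j assume "j \<in> {..l}"
    then have "(b - a) ^ l = (b - a) ^ (l - j) * (b - a) ^ j"
      by (simp flip: power_add)
    moreover have "real ((l + j) choose j) = fact (l + j) / (fact j * fact l)"
      using binomial_fact[of j "l + j"] by simp
    ultimately show "of_nat (l choose j) * (b - a) ^ (l - j) * (fact (j + l) / fact j)
                  / (fact l * (b - a) ^ l) * (x - b) ^ j
        = real (l choose j) * real ((l + j) choose j) * ((x - b) / (b - a)) ^ j"
      using assms by (simp add: field_simps)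
  qed simp
  finally show ?thesis
    by (simp add: shifted_legendre_def)
qed

lemma degree_legendre_poly: "degree (legendre_poly a b l) \<le> l"
  using degree_smult_le by (metis legendre_poly_def degree_rodrigues_poly)

lemma coeff_legendre_poly_top:
  "coeff (legendre_poly a b l) l = fact (2 * l) / (fact l ^ 2 * (b - a) ^ l)"
  by (simp add: legendre_poly_def coeff_rodrigues_poly_top power2_eq_square)

lemma integral_legendre_poly_orthogonal:
  assumes "a \<le> b" "degree q < l"
  shows "integral {a..b} (poly (legendre_poly a b l * q)) = 0"
  using integral_rodrigues_poly_orthogonal[OF assms]
  by (simp add: legendre_poly_def integral_poly_smult del: poly_mult)

(* The leading coefficients of L_{k+1} and L_{k-1}, the factor (k+1)/k coming from the
   antiderivative of v, and the squared norm of the monic Legendre polynomial of degree k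
   combine to h/(2k-1). *)
lemma legendre_constant_identity:
  fixes h :: real
  assumes "1 \<le> k" "h \<noteq> 0"
  shows "fact (2 * Suc k) / (fact (Suc k) ^ 2 * h ^ Suc k)
           * (fact (2 * (k - 1)) / (fact (k - 1) ^ 2 * h ^ (k - 1)))
           * ((real k + 1) / real k) * (fact k ^ 4 * h ^ (2 * k + 1) / (fact (2 * k) * fact (2 * k + 1)))
         = h / real (2 * k - 1)"
proof -
  obtain n where k: "k = Suc n"
    using assms(1) by (cases k) auto
  have monomial_identity:
    "(2 * A2) * B3 * (2 * A1) * B1 * G / ((A2 * A1 * F) ^ 2 * (h * h * H)) * (G / (F ^ 2 * H)) * (A2 / A1)
       * ((A1 * F) ^ 4 * (h * h * h * H * H) / (((2 * A1) * B1 * G) * (B3 * (2 * A1) * B1 * G)))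
     = h / B1" if "A1 \<noteq> 0" "A2 \<noteq> 0" "B1 \<noteq> 0" "B3 \<noteq> 0" "F \<noteq> 0" "G \<noteq> 0" "H \<noteq> 0"
    for A1 A2 B1 B3 F G H :: real
    using that assms(2) by (simp add: field_simps power2_eq_square power4_eq_xxxx)
  define A1 A2 B1 B3 where "A1 = real (Suc n)" and "A2 = real (Suc n) + 1"
    and "B1 = real (2 * Suc n - 1)" and "B3 = 2 * real (Suc n) + 1"
  have "fact (2 * Suc (Suc n)) = (2 * A2) * B3 * (2 * A1) * B1 * (fact (2 * n) :: real)"
    "fact (2 * Suc n) = (2 * A1) * B1 * (fact (2 * n) :: real)"
    "fact (2 * Suc n + 1) = B3 * (2 * A1) * B1 * (fact (2 * n) :: real)"
    "fact (Suc (Suc n)) = A2 * A1 * (fact n :: real)"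
    "fact (Suc n) = A1 * (fact n :: real)"
    by (simp_all add: A1_def A2_def B1_def B3_def algebra_simps)
  moreover have "A1 + 1 = A2"
    by (simp add: A1_def A2_def)
  moreover have "h ^ Suc (Suc n) = h * h * h ^ n" "h ^ Suc (Suc (Suc (n + n))) = h * h * h * h ^ n * h ^ n"
    by (simp_all only: power_Suc power_add mult.assoc)
  moreover have "2 * Suc n + 1 = Suc (Suc (Suc (n + n)))"
    by simp
  ultimately show ?thesis
    unfolding k diff_Suc_1 B1_def[symmetric] A1_def[symmetric]
    by (simp only:) (rule monomial_identity; simp add: assms(2) A1_def A2_def B1_def B3_def)
qed

section \<open>Quadrature and the operator M* on one cell\<close>

lemma sum_partial_sums_mult_diff:
  "(\<Sum>j\<le>n. (c + (\<Sum>m\<le>j. d m)) * (f j - f (Suc j)))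
     = c * f 0 - (c + (\<Sum>j\<le>n. d j)) * f (Suc n) + (\<Sum>j\<le>n. d j * f j :: 'a::comm_ring)"
  by (induction n) (simp_all add: algebra_simps)

locale exact_cell_quadrature =
  fixes k :: nat and a b :: real and x A :: "nat \<Rightarrow> real"
  assumes k_pos: "1 \<le> k"
    and a_less_b: "a < b"
    and x_first: "x 0 = a"
    and x_last: "x (Suc k) = b"
    and exact: "degree q \<le> 2 * k - 1 \<Longrightarrow> integral {a..b} (poly q) = (\<Sum>j\<le>Suc k. A j * poly q (x j))"
begin

abbreviation quadrature :: "(real \<Rightarrow> real) \<Rightarrow> real" where
  "quadrature f \<equiv> \<Sum>j\<le>Suc k. A j * f (x j)"

abbreviation quadrature_error :: "real poly \<Rightarrow> real" where
  "quadrature_error p \<equiv> integral {a..b} (poly p) - quadrature (poly p)"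

abbreviation Mstar_cell :: "real poly \<Rightarrow> nat \<Rightarrow> real" where
  "Mstar_cell v j \<equiv> poly v a + (\<Sum>m\<le>j. A m * poly (pderiv v) (x m))"

lemma quadrature_error_eq_coeff:
  assumes "degree p \<le> 2 * k"
  shows "quadrature_error p = coeff p (2 * k) * quadrature_error (monom 1 (2 * k))"
proof -
  define r where "r = p - smult (coeff p (2 * k)) (monom 1 (2 * k))"
  have "degree r \<le> 2 * k"
    unfolding r_def using assms degree_smult_le[of _ "monom 1 (2 * k)"] degree_monom_le[of 1 "2 * k"]
    by (intro degree_diff_le) (auto intro: order.trans)
  then have "degree r \<le> 2 * k - 1"
    by (rule degree_le_pred_if_coeff_eq_0) (simp add: r_def)
  then have "quadrature_error r = 0"
    by (simp add: exact)
  moreover have "quadrature_error r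
      = quadrature_error p - coeff p (2 * k) * quadrature_error (monom 1 (2 * k))"
    by (simp add: r_def integral_poly_diff integral_poly_smult algebra_simps sum_subtractf
        sum_distrib_left)
  ultimately show ?thesis by simp
qed

lemma sum_Mstar_cell_mult_diff:
  assumes "degree v \<le> k"
  shows "(\<Sum>j\<le>k. Mstar_cell v j * (f j - f (Suc j)))
       = poly v a * f 0 - poly v b * f (Suc k) + (\<Sum>j\<le>Suc k. A j * poly (pderiv v) (x j) * f j)"
proof -
  have "degree (pderiv v) \<le> 2 * k - 1"
    using assms by (simp add: degree_pderiv)
  then have "poly v b - poly v a = (\<Sum>j\<le>Suc k. A j * poly (pderiv v) (x j))"
    using exact integral_poly_pderiv[of a b v] a_less_b by simp
  then have "poly v a + (\<Sum>j\<le>k. A j * poly (pderiv v) (x j)) = poly v b - A (Suc k) * poly (pderiv v) b"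
    using x_last by simp
  then have "(\<Sum>j\<le>k. Mstar_cell v j * (f j - f (Suc j)))
      = poly v a * f 0 - (poly v b - A (Suc k) * poly (pderiv v) b) * f (Suc k)
        + (\<Sum>j\<le>k. A j * poly (pderiv v) (x j) * f j)"
    by (simp only: sum_partial_sums_mult_diff)
  also have "\<dots> = poly v a * f 0 - poly v b * f (Suc k) + (\<Sum>j\<le>Suc k. A j * poly (pderiv v) (x j) * f j)"
    using x_last by (simp add: algebra_simps)
  finally show ?thesis .
qed

lemma sum_Mstar_cell_mult_upwind_flux_diff:
  assumes "degree w \<le> k"
    and f: "f = (\<lambda>j. if j = 0 then \<beta> * U else \<beta> * poly u (x j))"
  shows "(\<Sum>j\<le>k. Mstar_cell w j * (f j - f (Suc j)))
       = \<beta> * (quadrature (\<lambda>y. poly u y * poly (pderiv w) y) + poly w a * U - poly w b * poly u b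
               - A 0 * poly (pderiv w) a * (poly u a - U))"
  using sum_Mstar_cell_mult_diff[OF assms(1), of f] x_first x_last
  by (simp add: f sum.atMost_Suc_shift sum_distrib_left algebra_simps del: sum.atMost_Suc)

lemma quadrature_pderiv_mult_if_Mstar_cell_eq_0:
  assumes "degree v \<le> k" "\<forall>j\<le>k. Mstar_cell v j = 0"
  shows "quadrature (poly (pderiv v * F)) = poly v b * poly F b - poly v a * poly F a"
  using sum_Mstar_cell_mult_diff[OF assms(1), of "\<lambda>j. poly F (x j)"] assms(2) x_first x_last
  by (simp add: mult.assoc)

lemma integral_mult_pderiv_if_Mstar_cell_eq_0:
  assumes "degree v \<le> k" "\<forall>j\<le>k. Mstar_cell v j = 0"
  shows "integral {a..b} (poly (v * pderiv F)) = - quadrature_error (pderiv v * F)"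
  using integral_poly_by_parts[of a b v F] quadrature_pderiv_mult_if_Mstar_cell_eq_0[OF assms] a_less_b
  by simp

lemma Mstar_cell_kernel_orthogonal:
  assumes "degree v \<le> k" "\<forall>j\<le>k. Mstar_cell v j = 0" "degree q < k"
  shows "integral {a..b} (poly (v * q)) = 0"
proof -
  have "degree (pderiv v * poly_antideriv q) \<le> (k - 1) + k"
    using degree_mult_le[of "pderiv v" "poly_antideriv q"] degree_poly_antideriv[of q] assms(1,3)
    by (simp add: degree_pderiv)
  then have "quadrature_error (pderiv v * poly_antideriv q) = 0"
    using k_pos by (simp add: exact)
  then show ?thesis
    using integral_mult_pderiv_if_Mstar_cell_eq_0[OF assms(1,2), of "poly_antideriv q"]
    by (simp add: pderiv_poly_antideriv)
qed

lemma Mstar_cell_kernel_integral_square: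
  assumes "degree v \<le> k" "\<forall>j\<le>k. Mstar_cell v j = 0"
  shows "integral {a..b} (poly (v * v))
       = - (real k / (real k + 1)) * coeff v k ^ 2 * quadrature_error (monom 1 (2 * k))"
proof -
  define F where "F = poly_antideriv v"
  have degrees: "degree (pderiv v) \<le> k - 1" "degree F \<le> k + 1"
    using assms(1) degree_poly_antideriv[of v] by (simp_all add: F_def degree_pderiv)
  then have "degree (pderiv v * F) \<le> 2 * k"
    using degree_mult_le[of "pderiv v" F] k_pos by simp
  moreover have "coeff (pderiv v * F) (2 * k) = coeff (pderiv v) (k - 1) * coeff F (k + 1)"
    using coeff_mult_degree_le_sum[OF degrees] k_pos by (simp add: mult_2)
  moreover have "coeff (pderiv v) (k - 1) * coeff F (k + 1) = (real k / (real k + 1)) * coeff v k ^ 2"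
    using k_pos by (simp add: F_def coeff_pderiv coeff_poly_antideriv power2_eq_square ac_simps)
  moreover have "integral {a..b} (poly (v * v)) = - quadrature_error (pderiv v * F)"
    using integral_mult_pderiv_if_Mstar_cell_eq_0[OF assms, of F]
    by (simp only: F_def pderiv_poly_antideriv)
  ultimately show ?thesis
    by (simp only: quadrature_error_eq_coeff mult_minus_left)
qed

lemma quadrature_shifted_legendre_product:
  "quadrature (\<lambda>y. shifted_legendre a b (Suc k) y * shifted_legendre a b (k - 1) y)
     = - (fact (2 * Suc k) / (fact (Suc k) ^ 2 * (b - a) ^ Suc k))
         * (fact (2 * (k - 1)) / (fact (k - 1) ^ 2 * (b - a) ^ (k - 1)))
         * quadrature_error (monom 1 (2 * k))"
proof -
  define P where "P = legendre_poly a b (Suc k) * legendre_poly a b (k - 1)"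
  have "quadrature (\<lambda>y. shifted_legendre a b (Suc k) y * shifted_legendre a b (k - 1) y)
      = quadrature (poly P)"
    by (simp add: P_def poly_legendre_poly[OF a_less_b])
  moreover have "integral {a..b} (poly P) = 0"
    unfolding P_def using a_less_b degree_legendre_poly[of a b "k - 1"]
    by (intro integral_legendre_poly_orthogonal) simp_all
  moreover have "degree P \<le> 2 * k"
    using degree_mult_le[of "legendre_poly a b (Suc k)" "legendre_poly a b (k - 1)"] k_pos
      degree_legendre_poly[of a b "Suc k"] degree_legendre_poly[of a b "k - 1"]
    by (simp add: P_def)
  moreover have "coeff P (2 * k) = coeff (legendre_poly a b (Suc k)) (Suc k) * coeff (legendre_poly a b (k - 1)) (k - 1)"
  proof -
    have "Suc k + (k - 1) = 2 * k"
      using k_pos by simp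
    then show ?thesis
      using coeff_mult_degree_le_sum[OF degree_legendre_poly[of a b "Suc k"] degree_legendre_poly[of a b "k - 1"]]
      by (simp add: P_def mult_2)
  qed
  ultimately show ?thesis
    using quadrature_error_eq_coeff[of P] by (simp only: coeff_legendre_poly_top) simp
qed

lemma Mstar_cell_kernel_coeff_nonzero:
  assumes "degree v \<le> k" "\<forall>j\<le>k. Mstar_cell v j = 0" "v \<noteq> 0"
  shows "coeff v k \<noteq> 0"
proof
  assume "coeff v k = 0"
  with assms(1,3) have "degree v < k"
    by (metis le_neq_implies_less leading_coeff_0_iff)
  then have "integral {a..b} (poly (v * v)) = 0"
    by (rule Mstar_cell_kernel_orthogonal[OF assms(1,2)])
  with assms(3) show False
    using integral_poly_square_eq_0_iff[OF a_less_b] by simp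
qed

lemma quadrature_error_monom_if_Mstar_cell_kernel:
  assumes "degree v \<le> k" "\<forall>j\<le>k. Mstar_cell v j = 0" "v \<noteq> 0"
  shows "quadrature_error (monom 1 (2 * k))
       = - ((real k + 1) / real k) * (fact k ^ 4 * (b - a) ^ (2 * k + 1) / (fact (2 * k) * fact (2 * k + 1)))"
proof -
  define \<rho> where "\<rho> = quadrature_error (monom 1 (2 * k))"
  define N where "N = fact k ^ 4 * (b - a) ^ (2 * k + 1) / (fact (2 * k) * fact (2 * k + 1))"
  have "coeff v k ^ 2 * (- (real k / (real k + 1)) * \<rho>) = coeff v k ^ 2 * N"
    using Mstar_cell_kernel_integral_square[OF assms(1,2)]
      integral_square_if_orthogonal[OF a_less_b assms(1) Mstar_cell_kernel_orthogonal[OF assms(1,2)]]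
    by (simp add: \<rho>_def N_def ac_simps)
  moreover have "coeff v k ^ 2 \<noteq> 0"
    using Mstar_cell_kernel_coeff_nonzero[OF assms] by simp
  ultimately have "- (real k / (real k + 1)) * \<rho> = N"
    using mult_left_cancel by blast
  then show ?thesis
    unfolding \<rho>_def[symmetric] N_def[symmetric] using k_pos by (simp add: field_simps)
qed

end

locale stable_cell_quadrature = exact_cell_quadrature +
  assumes stable: "(\<Sum>j\<le>Suc k. A j * (shifted_legendre a b (Suc k) (x j) * shifted_legendre a b (k - 1) (x j)))
                 < (b - a) / real (2 * k - 1)"
begin

lemma Mstar_cell_injective:
  assumes "degree v \<le> k" "\<forall>j\<le>k. Mstar_cell v j = 0"
  shows "v = 0"
proof (rule ccontr)
  assume "v \<noteq> 0"
  have "quadrature (\<lambda>y. shifted_legendre a b (Suc k) y * shifted_legendre a b (k - 1) y)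
      = fact (2 * Suc k) / (fact (Suc k) ^ 2 * (b - a) ^ Suc k)
         * (fact (2 * (k - 1)) / (fact (k - 1) ^ 2 * (b - a) ^ (k - 1))) * ((real k + 1) / real k)
         * (fact k ^ 4 * (b - a) ^ (2 * k + 1) / (fact (2 * k) * fact (2 * k + 1)))"
    unfolding quadrature_shifted_legendre_product quadrature_error_monom_if_Mstar_cell_kernel[OF assms \<open>v \<noteq> 0\<close>]
    by (simp only: mult_minus_left mult_minus_right minus_minus mult.assoc)
  also have "\<dots> = (b - a) / real (2 * k - 1)"
    using k_pos a_less_b by (intro legendre_constant_identity) simp_all
  finally show False
    using stable by simp
qed

lemma weight_nonzero:
  assumes j: "1 \<le> j" "j \<le> k"
  shows "A j \<noteq> 0"
proof
  assume "A j = 0"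
  \<comment> \<open>Then v with v' vanishing at the interior nodes other than x j, and v(a) = -A 0 v'(a),
    lies in the kernel of M*.\<close>
  define \<omega> where "\<omega> = (\<Prod>m\<in>{1..k} - {j}. [:- x m, 1:])"
  define v where "v = poly_antideriv \<omega> + [:- poly (poly_antideriv \<omega>) a - A 0 * poly \<omega> a:]"
  have "\<omega> \<noteq> 0"
    by (simp add: \<omega>_def)
  have "degree \<omega> \<le> sum (degree \<circ> (\<lambda>m. [:- x m, 1:])) ({1..k} - {j})"
    unfolding \<omega>_def by (intro degree_prod_sum_le) simp
  then have "degree \<omega> \<le> k - 1"
    using j by simp
  then have "degree v \<le> k"
    unfolding v_def using degree_poly_antideriv[of \<omega>] k_pos by (intro degree_add_le) auto
  moreover have "pderiv v = \<omega>"
    by (simp add: v_def pderiv_add pderiv_poly_antideriv)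
  moreover have "A m * poly \<omega> (x m) = 0" if "1 \<le> m" "m \<le> k" for m
    using that \<open>A j = 0\<close> by (cases "m = j") (auto simp: \<omega>_def poly_prod)
  then have "(\<Sum>m\<le>i. A m * poly \<omega> (x m)) = A 0 * poly \<omega> a" if "i \<le> k" for i
    using that x_first by (induction i) auto
  ultimately have "v = 0"
    by (intro Mstar_cell_injective) (auto simp: v_def)
  with \<open>pderiv v = \<omega>\<close> \<open>\<omega> \<noteq> 0\<close> show False
    by simp
qed

lemma Mstar_cell_surjective:
  assumes distinct: "inj_on x {1..k}"
  shows "\<exists>v. degree v \<le> k \<and> (\<forall>j\<le>k. Mstar_cell v j = y j)"
proof -
  obtain D where "degree D \<le> card {1..k} - 1" and D: "\<forall>i\<in>{1..k}. poly D (x i) = (y i - y (i - 1)) / A i"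
    using exists_interpolating_poly[OF finite_atLeastAtMost distinct, of "\<lambda>i. (y i - y (i - 1)) / A i"] by blast
  define v where "v = poly_antideriv D + [:y 0 - poly (poly_antideriv D) a - A 0 * poly D a:]"
  have "degree v \<le> k"
    unfolding v_def using \<open>degree D \<le> card {1..k} - 1\<close> degree_poly_antideriv[of D] k_pos
    by (intro degree_add_le) auto
  moreover have "Mstar_cell v j = y j" if "j \<le> k" for j
    using that
  proof (induction j)
    case 0
    then show ?case by (simp add: v_def pderiv_add pderiv_poly_antideriv x_first)
  next
    case (Suc j)
    have "A (Suc j) * poly D (x (Suc j)) = y (Suc j) - y j"
      using D weight_nonzero[of "Suc j"] Suc.prems by auto
    with Suc show ?case
      by (simp add: v_def pderiv_add pderiv_poly_antideriv)
  qed
  ultimately show ?thesis by blast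
qed

end

section \<open>The periodic mesh\<close>

lemma exact_cell_quadrature_cell:
  assumes "valid_mesh N k xs p" "assumption_S N k xs p A" "i < N"
  shows "exact_cell_quadrature k (xs i) (xs (Suc i)) (p i) (A i)"
  using assms by unfold_locales (auto simp: valid_mesh_def assumption_S_def quad_def)

lemma stable_cell_quadrature_cell:
  assumes "valid_mesh N k xs p" "assumption_S N k xs p A" "i < N"
  shows "stable_cell_quadrature k (xs i) (xs (Suc i)) (p i) (A i)"
  unfolding stable_cell_quadrature_def stable_cell_quadrature_axioms_def
  using exact_cell_quadrature_cell[OF assms] assms(2,3) by (auto simp: assumption_S_def quad_def)

lemma inj_on_subdivision_points:
  assumes "valid_mesh N k xs p" "i < N"
  shows "inj_on (p i) {1..k}"
proof (rule strict_mono_on_imp_inj_on, rule strict_mono_onI)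
  fix j j' assume "j \<in> {1..k}" "j' \<in> {1..k}" "j < j'"
  show "p i j < p i j'"
  proof (rule lift_Suc_mono_less_ivl[where N = "{..k}"])
    show "p i n < p i (Suc n)" if "n \<in> {..k}" for n
      using assms that by (simp add: valid_mesh_def)
    show "j < j'" "{j..<j'} \<subseteq> {..k}"
      using \<open>j < j'\<close> \<open>j' \<in> {1..k}\<close> by auto
  qed
qed

lemma Mstar_surjective:
  assumes mesh: "valid_mesh N k xs p" and S: "assumption_S N k xs p A"
  shows "\<exists>w. in_Vk N k w \<and> (\<forall>i<N. \<forall>j\<le>k. Mstar A xs p w i j = ws i j)"
proof -
  have "\<exists>v. i < N \<longrightarrow> degree v \<le> k
              \<and> (\<forall>j\<le>k. poly v (xs i) + (\<Sum>m\<le>j. A i m * poly (pderiv v) (p i m)) = ws i j)" for i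
    using stable_cell_quadrature.Mstar_cell_surjective[OF stable_cell_quadrature_cell[OF mesh S]
        inj_on_subdivision_points[OF mesh]]
    by blast
  then obtain w where "\<forall>i. i < N \<longrightarrow> degree (w i) \<le> k
      \<and> (\<forall>j\<le>k. poly (w i) (xs i) + (\<Sum>m\<le>j. A i m * poly (pderiv (w i)) (p i m)) = ws i j)"
    by metis
  then show ?thesis
    unfolding in_Vk_def Mstar_def by blast
qed

lemma all_iff_all_Mstar:
  assumes "valid_mesh N k xs p" "assumption_S N k xs p A"
    and local: "\<And>w w'. \<forall>i<N. \<forall>j\<le>k. w i j = w' i j \<Longrightarrow> P w \<longleftrightarrow> P w'"
  shows "(\<forall>w. P w) \<longleftrightarrow> (\<forall>w. in_Vk N k w \<longrightarrow> P (Mstar A xs p w))"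
proof (intro iffI allI impI)
  fix w assume "\<forall>w. in_Vk N k w \<longrightarrow> P (Mstar A xs p w)"
  moreover obtain W where "in_Vk N k W" "\<forall>i<N. \<forall>j\<le>k. Mstar A xs p W i j = w i j"
    using Mstar_surjective[OF assms(1,2)] by blast
  ultimately show "P w"
    using local by blast
qed simp

lemma next_cell_prev_cell:
  assumes "i < N"
  shows "next_cell N (prev_cell N i) = i"
proof -
  have "next_cell N (prev_cell N i) = Suc (i + N - 1) mod N"
    by (simp add: prev_cell_def next_cell_def mod_Suc_eq)
  also have "Suc (i + N - 1) = i + N"
    using assms by simp
  finally show ?thesis
    using assms by simp
qed

lemma prev_cell_next_cell:
  assumes "i < N"
  shows "prev_cell N (next_cell N i) = i"
proof (cases "Suc i = N")
  case True
  then show ?thesis by (simp add: prev_cell_def next_cell_def)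
next
  case False
  with assms have "prev_cell N (next_cell N i) = (i + N) mod N"
    by (simp add: prev_cell_def next_cell_def)
  with assms show ?thesis by simp
qed

lemma sum_prev_cell_reindex: "(\<Sum>i<N. F (prev_cell N i) i) = (\<Sum>i<N. F i (next_cell N i))"
proof (rule sum.reindex_bij_witness[of _ "next_cell N" "prev_cell N"])
  fix i assume "i \<in> {..<N}"
  then show "next_cell N (prev_cell N i) = i" "prev_cell N (next_cell N i) = i"
    by (simp_all add: next_cell_prev_cell prev_cell_next_cell)
  from \<open>i \<in> {..<N}\<close> show "prev_cell N i \<in> {..<N}" "next_cell N i \<in> {..<N}"
    by (simp_all add: prev_cell_def next_cell_def)
qed (simp add: next_cell_prev_cell)

lemma flux_term_Mstar:
  assumes mesh: "valid_mesh N k xs p" and S: "assumption_S N k xs p A"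
    and u: "in_Vk N k u" and w: "in_Vk N k w"
  shows "flux_term N k xs p \<beta> u (Mstar A xs p w) = Hstar N k xs p A \<beta> u w"
proof -
  define U where "U i = poly (u (prev_cell N i)) (xs (Suc (prev_cell N i)))" for i
  have cell: "(\<Sum>j\<le>k. Mstar A xs p w i j * (flux N k xs p \<beta> u i j - flux N k xs p \<beta> u i (Suc j)))
      = \<beta> * (quad k A p i (\<lambda>y. poly (u i) y * poly (pderiv (w i)) y)
              + poly (w i) (xs i) * U i - poly (w i) (xs (Suc i)) * poly (u i) (xs (Suc i))
              - A i 0 * poly (pderiv (w i)) (xs i) * (poly (u i) (xs i) - U i))" if "i < N" for i
  proof -
    interpret exact_cell_quadrature k "xs i" "xs (Suc i)" "p i" "A i"
      using exact_cell_quadrature_cell[OF mesh S that] .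
    have "flux N k xs p \<beta> u i = (\<lambda>j. if j = 0 then \<beta> * U i else \<beta> * poly (u i) (p i j))"
      using x_last by (auto simp: fun_eq_iff flux_def U_def)
    then show ?thesis
      using sum_Mstar_cell_mult_upwind_flux_diff[of "w i"] w that
      by (simp add: Mstar_def quad_def in_Vk_def)
  qed
  have "flux_term N k xs p \<beta> u (Mstar A xs p w)
      = \<beta> * ((\<Sum>i<N. quad k A p i (\<lambda>y. poly (u i) y * poly (pderiv (w i)) y))
              + (\<Sum>i<N. poly (w i) (xs i) * U i) - (\<Sum>i<N. poly (w i) (xs (Suc i)) * poly (u i) (xs (Suc i)))
              - (\<Sum>i<N. A i 0 * poly (pderiv (w i)) (xs i) * (poly (u i) (xs i) - U i)))"
    unfolding flux_term_def using cell
    by (simp add: sum_distrib_left sum.distrib sum_subtractf right_diff_distrib distrib_left)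
  also have "(\<Sum>i<N. poly (w i) (xs i) * U i)
      = (\<Sum>i<N. poly (u i) (xs (Suc i)) * poly (w (next_cell N i)) (xs (next_cell N i)))"
    unfolding U_def using sum_prev_cell_reindex[of "\<lambda>i' i. poly (w i) (xs i) * poly (u i') (xs (Suc i'))" N]
    by (simp add: mult.commute)
  finally show ?thesis
    by (simp add: Hstar_def U_def sum_subtractf algebra_simps)
qed

lemma pair_star_cong: "\<forall>i<N. \<forall>j\<le>k. w i j = w' i j \<Longrightarrow> pair_star N k p v w = pair_star N k p v w'"
  unfolding pair_star_def by (intro sum.cong refl) auto

lemma src_star_cong: "\<forall>i<N. \<forall>j\<le>k. w i j = w' i j \<Longrightarrow> src_star N k p g w = src_star N k p g w'"
  unfolding src_star_def by (intro sum.cong refl) auto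

lemma flux_term_cong:
  "\<forall>i<N. \<forall>j\<le>k. w i j = w' i j \<Longrightarrow> flux_term N k xs p \<beta> u w = flux_term N k xs p \<beta> u w'"
  unfolding flux_term_def by (intro sum.cong refl) auto

theorem theorem3p12:
  fixes N k s l :: nat
    and xs :: "nat \<Rightarrow> real" and p A :: "nat \<Rightarrow> nat \<Rightarrow> real"
    and \<beta> \<tau> :: real and c d :: "nat \<Rightarrow> nat \<Rightarrow> real"
    and u :: "nat \<Rightarrow> nat \<Rightarrow> real poly"
    and g :: "nat \<Rightarrow> real \<Rightarrow> real"
  assumes mesh: "valid_mesh N k xs p"
    and S: "assumption_S N k xs p A"
    and beta: "\<beta> > 0"
    and csum: "\<forall>l<s. (\<Sum>\<kappa>\<le>l. c l \<kappa>) = 1"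
    and stages: "\<forall>\<kappa>\<le>s. in_Vk N k (u \<kappa>)"
    and gmeas: "\<forall>\<kappa><s. g \<kappa> measurable_on {xs 0..xs N}"
    and gL2: "\<forall>\<kappa><s. (\<lambda>x. (g \<kappa> x)\<^sup>2) integrable_on {xs 0..xs N}"
    and lt: "l < s"
  shows "(\<forall>w :: nat \<Rightarrow> nat \<Rightarrow> real.
            pair_star N k p (u (Suc l)) w =
            (\<Sum>\<kappa>\<le>l. c l \<kappa> * pair_star N k p (u \<kappa>) w
                 + \<tau> * d l \<kappa> * (flux_term N k xs p \<beta> (u \<kappa>) w + src_star N k p (g \<kappa>) w)))
     \<longleftrightarrow>
         (\<forall>w :: nat \<Rightarrow> real poly. in_Vk N k w \<longrightarrow>
            pair_star N k p (u (Suc l)) (Mstar A xs p w) =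
            (\<Sum>\<kappa>\<le>l. c l \<kappa> * pair_star N k p (u \<kappa>) (Mstar A xs p w)
                 + \<tau> * d l \<kappa> * (Hstar N k xs p A \<beta> (u \<kappa>) w
                                     + src_star N k p (g \<kappa>) (Mstar A xs p w))))"
proof -
  let ?stage = "\<lambda>w. pair_star N k p (u (Suc l)) w =
    (\<Sum>\<kappa>\<le>l. c l \<kappa> * pair_star N k p (u \<kappa>) w
         + \<tau> * d l \<kappa> * (flux_term N k xs p \<beta> (u \<kappa>) w + src_star N k p (g \<kappa>) w))"
  have local: "?stage w \<longleftrightarrow> ?stage w'" if "\<forall>i<N. \<forall>j\<le>k. w i j = w' i j" for w w'
    using pair_star_cong[OF that] src_star_cong[OF that] flux_term_cong[OF that] by simp
  have flux: "flux_term N k xs p \<beta> (u \<kappa>) (Mstar A xs p w) = Hstar N k xs p A \<beta> (u \<kappa>) w"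
    if "\<kappa> \<le> l" "in_Vk N k w" for \<kappa> w
    using flux_term_Mstar[OF mesh S _ that(2)] stages that(1) lt by simp
  have "(\<forall>w. ?stage w) \<longleftrightarrow> (\<forall>w. in_Vk N k w \<longrightarrow> ?stage (Mstar A xs p w))"
    by (rule all_iff_all_Mstar[OF mesh S local])
  then show ?thesis
    by (simp add: flux cong: sum.cong_simp)
qed

end
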